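(* Let $\Delta$ be a simplicial polytopal fan in $\mathbb{R}^d$ with ray generators $\mathbf{v}_1,\ldots,\mathbf{v}_n$, let $\mathbf{u}^{(1)},\ldots,\mathbf{u}^{(m)}\in\mathbb{R}^d$, $U=(\mathbf{u}^{(1)},\ldots,\mathbf{u}^{(m)})^\mathsf{T}$, let $\mathbf{h}_0\in\mathcal{P}(\Delta)$, $\mathbf{y}_0=A_U\mathbf{h}_0$, and $\mathbf{y}\in\mathbb{R}^m$. Let $\hat{\mathbf{y}}$ be the unique point of $A_U\mathcal{P}(\Delta)$ with minimal distance to $\mathbf{y}$, and $\bar{\mathbf{y}}$ the orthogonal projection of $\mathbf{y}$ onto the subspace $A_U\mathbb{R}^n$. Let $\bar{\mathbf{h}},\hat{\mathbf{h}}\in\mathbb{R}^n$ satisfy $A_U\bar{\mathbf{h}}=\bar{\mathbf{y}}$ and $A_U\hat{\mathbf{h}}=\hat{\mathbf{y}}$. Then \[ \|\hat{\mathbf{y}}-\mathbf{y}_0\|\le\|\bar{\mathbf{y}}-\mathbf{y}_0\|, \qquad \sqrt{\lambda_1(A_U^\mathsf{T}A_U)}\,\|\hat{\mathbf{h}}-\mathbf{h}_0\|\le\sqrt{\lambda_n(A_U^\mathsf{T}A_U)}\,\|\bar{\mathbf{h}}-\mathbf{h}_0\|. \]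
   Context: A fan is simplicial if every cone is generated by linearly independent vectors; polytopal if it is the normal fan of a polytope. The deformation cone $\mathcal{P}(\Delta)\subseteq\mathbb{R}^n$ is the closed polyhedral cone of support vectors $(h_P(\mathbf{v}_i))_i$ of polytopes $P$ whose normal fan is coarsened by $\Delta$, where $h_P(\mathbf{u})=\max_{\mathbf{x}\in P}\langle\mathbf{x},\mathbf{u}\rangle$. For $\mathbf{u}\in\mathbb{R}^d$, with $\sigma$ the cone of $\Delta$ containing $\mathbf{u}$ in its relative interior and $\mathbf{u}=\sum_{k\in I_\sigma}\lambda_k\mathbf{v}_k$ over the generators of $\sigma$, set $[\mathbf{u}]_i=\lambda_i$ for $i\in I_\sigma$ and $0$ otherwise; $A_U$ is the $m\times n$ matrix with rows $[\mathbf{u}^{(i)}]^\mathsf{T}$. For a symmetric matrix $A\in\mathbb{R}^{n\times n}$, $\lambda_1(A)\le\cdots\le\lambda_n(A)$ are its eigenvalues. *)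

theory Defs
  imports "HOL-Analysis.Analysis"
begin

definition support_fun :: "(real^'d) set \<Rightarrow> real^'d \<Rightarrow> real" where
  "support_fun P u = Sup ((\<lambda>x. inner x u) ` P)"

definition normal_cone :: "(real^'d) set \<Rightarrow> (real^'d) set \<Rightarrow> (real^'d) set" where
  "normal_cone P F = {u. \<forall>x\<in>P. \<forall>y\<in>F. inner x u \<le> inner y u}"

definition normal_fan :: "(real^'d) set \<Rightarrow> (real^'d) set set" where
  "normal_fan P = {normal_cone P F | F. F face_of P \<and> F \<noteq> {}}"

definition polytopal_fan :: "(real^'d) set set \<Rightarrow> bool" where
  "polytopal_fan \<Delta> \<longleftrightarrow> (\<exists>Q. polytope Q \<and> \<Delta> = normal_fan Q)"

definition cone_gen :: "('n \<Rightarrow> real^'d) \<Rightarrow> 'n set \<Rightarrow> (real^'d) set" where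
  "cone_gen v I = {(\<Sum>i\<in>I. c i *\<^sub>R v i) | c. \<forall>i\<in>I. c i \<ge> 0}"

definition gens :: "('n \<Rightarrow> real^'d) \<Rightarrow> (real^'d) set \<Rightarrow> 'n set" where
  "gens v \<sigma> = {i. v i \<in> \<sigma>}"

definition simplicial_fan_with_rays :: "(real^'d) set set \<Rightarrow> ('n::finite \<Rightarrow> real^'d) \<Rightarrow> bool" where
  "simplicial_fan_with_rays \<Delta> v \<longleftrightarrow>
     (\<forall>i. v i \<noteq> 0 \<and> cone_gen v {i} \<in> \<Delta>) \<and>
     (\<forall>i j. cone_gen v {i} = cone_gen v {j} \<longrightarrow> i = j) \<and>
     (\<forall>\<sigma>\<in>\<Delta>. aff_dim \<sigma> = 1 \<longrightarrow> (\<exists>i. \<sigma> = cone_gen v {i})) \<and>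
     (\<forall>\<sigma>\<in>\<Delta>. \<sigma> = cone_gen v (gens v \<sigma>) \<and> independent (v ` gens v \<sigma>))"

definition deformation_cone :: "(real^'d) set set \<Rightarrow> ('n::finite \<Rightarrow> real^'d) \<Rightarrow> (real^'n) set" where
  "deformation_cone \<Delta> v =
     {(\<chi> i. support_fun P (v i)) | P. polytope P \<and> P \<noteq> {} \<and>
        (\<forall>\<sigma>\<in>\<Delta>. \<exists>\<tau>\<in>normal_fan P. \<sigma> \<subseteq> \<tau>)}"

definition bracket :: "(real^'d) set set \<Rightarrow> ('n::finite \<Rightarrow> real^'d) \<Rightarrow> real^'d \<Rightarrow> real^'n" where
  "bracket \<Delta> v u = (THE lam. \<exists>\<sigma>\<in>\<Delta>. u \<in> rel_interior \<sigma> \<and>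
       (\<forall>i. i \<notin> gens v \<sigma> \<longrightarrow> lam $ i = 0) \<and>
       u = (\<Sum>i\<in>gens v \<sigma>. (lam $ i) *\<^sub>R v i))"

definition A_mat :: "(real^'d) set set \<Rightarrow> ('n::finite \<Rightarrow> real^'d) \<Rightarrow> real^'d^'m \<Rightarrow> real^'n^'m" where
  "A_mat \<Delta> v U = (\<chi> k. bracket \<Delta> v (U $ k))"

text \<open>(Real) eigenvalues of a square matrix; for symmetric matrices these are all eigenvalues.\<close>
definition eigenvalues :: "real^'n^'n \<Rightarrow> real set" where
  "eigenvalues M = {c. \<exists>x. x \<noteq> 0 \<and> M *v x = c *\<^sub>R x}"

definition lambda_min :: "real^'n^'n \<Rightarrow> real" where
  "lambda_min M = Min (eigenvalues M)"

definition lambda_max :: "real^'n^'n \<Rightarrow> real" where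
  "lambda_max M = Max (eigenvalues M)"

end

theory Submission
  imports Defs
begin

(* The nearest point yhat of the convex set C = A_U P(Delta) to y is also the nearest point of C
   to the orthogonal projection ybar of y onto the subspace V = A_U R^n containing C, because
   y - ybar is orthogonal to V. The obtuse-angle characterisation of nearest points then gives
   |yhat - c| <= |ybar - c| for every c in C, in particular for c = y0. The second inequality
   sandwiches this between the Rayleigh bounds lambda_1 |x|^2 <= |A_U x|^2 <= lambda_n |x|^2.
   Convexity of P(Delta) comes from Minkowski combinations: (1 - t) P + t Q has support function
   (1 - t) h_P + t h_Q, and common maximisers of a cone in P and in Q combine to a common
   maximiser in (1 - t) P + t Q, so Delta still coarsens its normal fan. *)

lemma inner_matrix_symmetric:
  fixes M :: "real^'n^'n"
  assumes "transpose M = M"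
  shows "inner (M *v x) y = inner x (M *v y)"
proof -
  have "M *v x = x v* M" using vector_transpose_matrix[of x M] assms by simp
  then show ?thesis by (simp add: dot_lmul_matrix)
qed

lemma inner_gram_matrix:
  fixes A :: "real^'n^'m"
  shows "inner x ((transpose A ** A) *v x) = (norm (A *v x))\<^sup>2"
proof -
  have "inner x ((transpose A ** A) *v x) = inner ((A *v x) v* A) x"
    by (simp add: inner_commute transpose_matrix_vector flip: matrix_vector_mul_assoc)
  also have "\<dots> = inner (A *v x) (A *v x)" by (rule dot_lmul_matrix)
  finally show ?thesis by (simp add: power2_norm_eq_inner)
qed

lemma matrix_vector_mult_uminus:
  fixes M :: "'a::ring_1^'n^'m"
  shows "(- M) *v x = - (M *v x)"
  using matrix_vector_mult_diff_rdistrib[of 0 M x] by simp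

lemma finite_eigenvalues_symmetric:
  fixes M :: "real^'n^'n"
  assumes sym: "transpose M = M"
  shows "finite (eigenvalues M)"
proof -
  have "\<forall>c\<in>eigenvalues M. \<exists>x. x \<noteq> 0 \<and> M *v x = c *\<^sub>R x" by (simp add: eigenvalues_def)
  then obtain e where e: "\<And>c. c \<in> eigenvalues M \<Longrightarrow> e c \<noteq> 0 \<and> M *v e c = c *\<^sub>R e c"
    by metis
  have inj: "inj_on e (eigenvalues M)"
  proof (rule inj_onI)
    fix c d assume c: "c \<in> eigenvalues M" and d: "d \<in> eigenvalues M" and "e c = e d"
    have "c *\<^sub>R e c = M *v e c" using e[OF c] by simp
    also have "\<dots> = d *\<^sub>R e c" using e[OF d] \<open>e c = e d\<close> by simp
    finally show "c = d" using e[OF c] by simp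
  qed
  have "inner (e c) (e d) = 0" if "c \<in> eigenvalues M" "d \<in> eigenvalues M" "c \<noteq> d" for c d
  proof -
    have "c * inner (e c) (e d) = inner (M *v e c) (e d)" using e[OF that(1)] by simp
    also have "\<dots> = inner (e c) (M *v e d)" using sym by (rule inner_matrix_symmetric)
    also have "\<dots> = d * inner (e c) (e d)" using e[OF that(2)] by simp
    finally show ?thesis using \<open>c \<noteq> d\<close> by simp
  qed
  then have "pairwise orthogonal (e ` eigenvalues M)"
    unfolding pairwise_def orthogonal_def by blast
  moreover have "0 \<notin> e ` eigenvalues M" using e by auto
  ultimately have "independent (e ` eigenvalues M)"
    by (rule pairwise_orthogonal_independent)
  then have "finite (e ` eigenvalues M)" by (rule independent_imp_finite)
  then show ?thesis using inj by (rule finite_imageD)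
qed

text \<open>A unit vector at which the Rayleigh quotient attains its maximum \<open>c\<close> is an eigenvector
  for \<open>c\<close>: the first variation of \<open>z \<mapsto> z \<bullet> M z - c \<parallel>z\<parallel>\<^sup>2\<close> at \<open>x\<close> in the direction
  \<open>r = M x - c x\<close> is \<open>2 \<parallel>r\<parallel>\<^sup>2\<close>, and it must vanish.\<close>

lemma eigenvector_of_rayleigh_max:
  fixes M :: "real^'n^'n"
  assumes sym: "transpose M = M"
    and bound: "\<And>z. inner z (M *v z) \<le> c * (norm z)\<^sup>2"
    and x: "norm x = 1" "inner x (M *v x) = c"
  shows "M *v x = c *\<^sub>R x"
proof -
  define r where "r = M *v x - c *\<^sub>R x"
  define f where "f t = inner (x + t *\<^sub>R r) (M *v (x + t *\<^sub>R r)) - c * (norm (x + t *\<^sub>R r))\<^sup>2" for t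
  have f_eq: "f t = 2 * inner r r * t + (inner r (M *v r) - c * inner r r) * t\<^sup>2" for t
  proof -
    have "inner x x = 1" using x(1) by (simp add: dot_square_norm)
    moreover have "inner x (M *v r) = inner (M *v x) r" using inner_matrix_symmetric[OF sym] by simp
    ultimately show ?thesis
      using x(2) unfolding f_def r_def power2_norm_eq_inner
      by (simp add: inner_commute algebra_simps power2_eq_square)
  qed
  have der: "DERIV f 0 :> 2 * inner r r"
    unfolding f_eq[abs_def] by (auto intro!: derivative_eq_intros)
  have max: "\<forall>t. \<bar>0 - t\<bar> < 1 \<longrightarrow> f t \<le> f 0"
    using bound x by (simp add: f_def)
  have "2 * inner r r = 0"
    using DERIV_local_max[OF der zero_less_one max] .
  then show ?thesis by (simp add: r_def)
qed

lemma exists_eigenvalue_rayleigh_upper: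
  fixes M :: "real^'n^'n"
  assumes sym: "transpose M = M"
  shows "\<exists>c\<in>eigenvalues M. \<forall>z. inner z (M *v z) \<le> c * (norm z)\<^sup>2"
proof -
  have "continuous_on (sphere 0 1) (\<lambda>z. M *v z)"
    using matrix_vector_mul_linear linear_continuous_on linear_linear by blast
  then have "continuous_on (sphere 0 1) (\<lambda>z. inner z (M *v z))"
    by (intro continuous_on_inner continuous_on_id)
  moreover have "sphere (0 :: real^'n) 1 \<noteq> {}" by (simp add: sphere_eq_empty)
  ultimately obtain x where x: "x \<in> sphere 0 1"
    and max: "\<forall>y\<in>sphere 0 1. inner y (M *v y) \<le> inner x (M *v x)"
    using continuous_attains_sup[OF compact_sphere] by blast
  define c where "c = inner x (M *v x)"
  have bound: "inner z (M *v z) \<le> c * (norm z)\<^sup>2" for z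
  proof (cases "z = 0")
    case False
    define y where "y = (1 / norm z) *\<^sub>R z"
    have "y \<in> sphere 0 1" using False by (simp add: y_def)
    then have "inner y (M *v y) \<le> c" using max by (simp add: c_def)
    moreover have "z = norm z *\<^sub>R y" using False by (simp add: y_def)
    then have "inner z (M *v z) = (norm z)\<^sup>2 * inner y (M *v y)"
      by (metis inner_scaleR_left inner_scaleR_right matrix_vector_mult_scaleR mult.assoc power2_eq_square)
    ultimately show ?thesis by (metis mult.commute mult_right_mono zero_le_power2)
  qed simp
  have "M *v x = c *\<^sub>R x" using x by (intro eigenvector_of_rayleigh_max[OF sym bound]) (auto simp: c_def)
  moreover have "x \<noteq> 0" using x by auto
  ultimately have "c \<in> eigenvalues M" unfolding eigenvalues_def by blast
  with bound show ?thesis by (intro bexI allI)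
qed

lemma rayleigh_le_lambda_max:
  fixes M :: "real^'n^'n"
  assumes sym: "transpose M = M"
  shows "inner x (M *v x) \<le> lambda_max M * (norm x)\<^sup>2"
proof -
  from exists_eigenvalue_rayleigh_upper[OF sym]
  obtain c where c: "c \<in> eigenvalues M" "\<forall>z. inner z (M *v z) \<le> c * (norm z)\<^sup>2" ..
  have "c \<le> lambda_max M"
    unfolding lambda_max_def by (rule Max_ge[OF finite_eigenvalues_symmetric[OF sym] c(1)])
  have "inner x (M *v x) \<le> c * (norm x)\<^sup>2" using c(2) by (rule spec)
  also have "\<dots> \<le> lambda_max M * (norm x)\<^sup>2" using \<open>c \<le> lambda_max M\<close> by (rule mult_right_mono) simp
  finally show ?thesis .
qed

lemma lambda_min_le_rayleigh:
  fixes M :: "real^'n^'n"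
  assumes sym: "transpose M = M"
  shows "lambda_min M * (norm x)\<^sup>2 \<le> inner x (M *v x)"
proof -
  have "transpose (- M) = - M" using transpose_scalar[of "-1" M] sym by simp
  from exists_eigenvalue_rayleigh_upper[OF this]
  obtain c where c: "c \<in> eigenvalues (- M)" "\<forall>z. inner z ((- M) *v z) \<le> c * (norm z)\<^sup>2" ..
  obtain z where "z \<noteq> 0" "- (M *v z) = c *\<^sub>R z"
    using c(1) unfolding eigenvalues_def matrix_vector_mult_uminus by blast
  then have "- c \<in> eigenvalues M"
    unfolding eigenvalues_def mem_Collect_eq by (intro exI[of _ z]) (simp add: minus_equation_iff[of "M *v z"])
  then have "lambda_min M \<le> - c"
    unfolding lambda_min_def by (rule Min_le[OF finite_eigenvalues_symmetric[OF sym]])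
  then have "lambda_min M * (norm x)\<^sup>2 \<le> - c * (norm x)\<^sup>2" by (rule mult_right_mono) simp
  also have "\<dots> \<le> inner x (M *v x)"
    using c(2)[rule_format, of x] by (simp add: matrix_vector_mult_uminus)
  finally show ?thesis .
qed

lemma norm_matrix_vector_lambda_bounds:
  fixes A :: "real^'n^'m"
  shows "sqrt (lambda_min (transpose A ** A)) * norm x \<le> norm (A *v x)"
    and "norm (A *v x) \<le> sqrt (lambda_max (transpose A ** A)) * norm x"
proof -
  let ?M = "transpose A ** A"
  have sym: "transpose ?M = ?M" by (simp add: matrix_transpose_mul)
  \<comment> \<open>no sign condition: \<open>sqrt\<close> is odd on all of \<open>\<real>\<close>, so \<open>real_sqrt_mult\<close> is unconditional\<close>
  have "sqrt (lambda_min ?M) * norm x = sqrt (lambda_min ?M * (norm x)\<^sup>2)" by (simp add: real_sqrt_mult)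
  also have "\<dots> \<le> sqrt ((norm (A *v x))\<^sup>2)"
    using lambda_min_le_rayleigh[OF sym, of x] unfolding inner_gram_matrix by (rule real_sqrt_le_mono)
  finally show "sqrt (lambda_min ?M) * norm x \<le> norm (A *v x)" by simp
  have "norm (A *v x) = sqrt ((norm (A *v x))\<^sup>2)" by simp
  also have "\<dots> \<le> sqrt (lambda_max ?M * (norm x)\<^sup>2)"
    using rayleigh_le_lambda_max[OF sym, of x] unfolding inner_gram_matrix by (rule real_sqrt_le_mono)
  also have "\<dots> = sqrt (lambda_max ?M) * norm x" by (simp add: real_sqrt_mult)
  finally show "norm (A *v x) \<le> sqrt (lambda_max ?M) * norm x" .
qed

text \<open>\<open>any_closest_point_dot\<close> without its closedness hypothesis, which the argument does not need.\<close>

lemma nearest_point_inner_le: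
  fixes S :: "'a::real_inner set"
  assumes "convex S" "x \<in> S" "y \<in> S" "\<forall>z\<in>S. dist a x \<le> dist a z"
  shows "inner (a - x) (y - x) \<le> 0"
proof (rule ccontr)
  assume "\<not> ?thesis"
  then obtain u where u: "0 < u" "u \<le> 1" "dist (x + u *\<^sub>R (y - x)) a < dist x a"
    using closer_point_lemma[of a x y] by auto
  have "(1 - u) *\<^sub>R x + u *\<^sub>R y \<in> S"
    using convexD_alt[OF assms(1-3)] u by simp
  then show False
    using assms(4) u(3) by (force simp: dist_commute algebra_simps)
qed

lemma nearest_point_closer_than_projection:
  fixes C V :: "'a::real_inner set"
  assumes "convex C" "subspace V" "C \<subseteq> V"
    and nearest: "yhat \<in> C" "\<forall>z\<in>C. dist y yhat \<le> dist y z"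
    and orth: "\<forall>z\<in>V. inner (y - ybar) z = 0"
    and "c \<in> C"
  shows "norm (yhat - c) \<le> norm (ybar - c)"
proof -
  have "inner (y - yhat) (c - yhat) \<le> 0"
    using nearest_point_inner_le[OF \<open>convex C\<close> nearest(1) \<open>c \<in> C\<close> nearest(2)] .
  moreover have "inner (y - ybar) (c - yhat) = 0"
    using orth assms(2,3) nearest(1) \<open>c \<in> C\<close> by (simp add: subset_iff subspace_diff)
  ultimately have obtuse: "inner (ybar - yhat) (c - yhat) \<le> 0"
    by (simp add: inner_diff_left)
  have "inner (ybar - c) (ybar - c)
      = inner (ybar - yhat) (ybar - yhat) - 2 * inner (ybar - yhat) (c - yhat) + inner (yhat - c) (yhat - c)"
    by (simp add: inner_diff_left inner_diff_right inner_commute algebra_simps)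
  then have "inner (yhat - c) (yhat - c) \<le> inner (ybar - c) (ybar - c)"
    using obtuse inner_ge_zero[of "ybar - yhat"] by linarith
  then show ?thesis by (simp add: norm_le)
qed

lemma support_fun_eq_max:
  assumes "a \<in> P" "u \<in> normal_cone P {a}"
  shows "support_fun P u = inner a u"
  using assms unfolding support_fun_def normal_cone_def by (intro cSup_eq_maximum) auto

lemma compact_exists_maximizer:
  fixes P :: "(real^'d) set"
  assumes "compact P" "P \<noteq> {}"
  obtains a where "a \<in> P" "u \<in> normal_cone P {a}"
proof -
  have "continuous_on P (\<lambda>x. inner x u)" by (intro continuous_intros)
  then obtain a where "a \<in> P" "\<forall>x\<in>P. inner x u \<le> inner a u"
    using continuous_attains_sup[OF assms] by blast
  then show ?thesis by (intro that) (auto simp: normal_cone_def)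
qed

lemma face_of_common_maximizers:
  fixes P :: "(real^'d) set"
  assumes "convex P"
  shows "{a\<in>P. \<sigma> \<subseteq> normal_cone P {a}} face_of P"
proof -
  have face: "{a\<in>P. u \<in> normal_cone P {a}} face_of P" for u
  proof (cases "\<exists>b\<in>P. u \<in> normal_cone P {b}")
    case True
    then obtain b where b: "b \<in> P" "\<forall>x\<in>P. inner u x \<le> inner u b"
      unfolding normal_cone_def by (auto simp: inner_commute)
    then have "{a\<in>P. u \<in> normal_cone P {a}} = P \<inter> {x. inner u x = inner u b}"
      unfolding normal_cone_def by (auto simp: inner_commute intro: order_antisym)
    moreover have "(P \<inter> {x. inner u x = inner u b}) face_of P"
      using b by (intro face_of_Int_supporting_hyperplane_le[OF assms]) auto
    ultimately show ?thesis by simp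
  next
    case False
    then have "{a\<in>P. u \<in> normal_cone P {a}} = {}" by blast
    then show ?thesis by (simp only: empty_face_of)
  qed
  have "{a\<in>P. \<sigma> \<subseteq> normal_cone P {a}} = \<Inter> (insert P ((\<lambda>u. {a\<in>P. u \<in> normal_cone P {a}}) ` \<sigma>))"
    by auto
  also have "\<dots> face_of P"
    by (rule face_of_Inter) (auto intro: face face_of_refl[OF assms])
  finally show ?thesis .
qed

lemma subset_cone_of_normal_fan_iff:
  fixes P :: "(real^'d) set"
  assumes "convex P"
  shows "(\<exists>\<tau>\<in>normal_fan P. \<sigma> \<subseteq> \<tau>) \<longleftrightarrow> (\<exists>a\<in>P. \<sigma> \<subseteq> normal_cone P {a})"
proof
  assume "\<exists>\<tau>\<in>normal_fan P. \<sigma> \<subseteq> \<tau>"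
  then obtain F a where "F face_of P" "a \<in> F" "\<sigma> \<subseteq> normal_cone P F"
    unfolding normal_fan_def by blast
  then show "\<exists>a\<in>P. \<sigma> \<subseteq> normal_cone P {a}"
    unfolding normal_cone_def using face_of_imp_subset by blast
next
  assume "\<exists>a\<in>P. \<sigma> \<subseteq> normal_cone P {a}"
  then obtain a where a: "a \<in> P" "\<sigma> \<subseteq> normal_cone P {a}" by blast
  define F where "F = {b\<in>P. \<sigma> \<subseteq> normal_cone P {b}}"
  have "F face_of P" "F \<noteq> {}"
    using face_of_common_maximizers[OF assms] a by (auto simp: F_def)
  moreover have "\<sigma> \<subseteq> normal_cone P F" unfolding F_def normal_cone_def by auto
  ultimately show "\<exists>\<tau>\<in>normal_fan P. \<sigma> \<subseteq> \<tau>" unfolding normal_fan_def by blast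
qed

definition minkowski_comb :: "real \<Rightarrow> (real^'d) set \<Rightarrow> (real^'d) set \<Rightarrow> (real^'d) set" where
  "minkowski_comb t P Q = (\<lambda>(a, b). (1 - t) *\<^sub>R a + t *\<^sub>R b) ` (P \<times> Q)"

lemma polytope_minkowski_comb:
  assumes "polytope P" "polytope Q"
  shows "polytope (minkowski_comb t P Q)"
proof -
  have "linear (\<lambda>(a :: real^'d, b :: real^'d). (1 - t) *\<^sub>R a + t *\<^sub>R b)"
    by (simp add: linear_iff case_prod_beta algebra_simps)
  then show ?thesis
    unfolding minkowski_comb_def using assms by (intro polytope_linear_image polytope_Times)
qed

lemma minkowski_comb_common_maximizer:
  assumes "a \<in> P" "\<sigma> \<subseteq> normal_cone P {a}" "b \<in> Q" "\<sigma> \<subseteq> normal_cone Q {b}" "0 \<le> t" "t \<le> 1"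
  shows "(1 - t) *\<^sub>R a + t *\<^sub>R b \<in> minkowski_comb t P Q"
    and "\<sigma> \<subseteq> normal_cone (minkowski_comb t P Q) {(1 - t) *\<^sub>R a + t *\<^sub>R b}"
proof -
  show "(1 - t) *\<^sub>R a + t *\<^sub>R b \<in> minkowski_comb t P Q"
    unfolding minkowski_comb_def using assms(1,3) by force
  show "\<sigma> \<subseteq> normal_cone (minkowski_comb t P Q) {(1 - t) *\<^sub>R a + t *\<^sub>R b}"
  proof
    fix u assume "u \<in> \<sigma>"
    then have "\<forall>x\<in>P. inner x u \<le> inner a u" "\<forall>y\<in>Q. inner y u \<le> inner b u"
      using assms(2,4) unfolding normal_cone_def by auto
    then have "(1 - t) * inner x u + t * inner y u \<le> (1 - t) * inner a u + t * inner b u"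
      if "x \<in> P" "y \<in> Q" for x y
      using that assms(5,6) by (intro add_mono mult_left_mono) auto
    then show "u \<in> normal_cone (minkowski_comb t P Q) {(1 - t) *\<^sub>R a + t *\<^sub>R b}"
      unfolding normal_cone_def minkowski_comb_def by (auto simp: inner_add_left)
  qed
qed

lemma support_fun_minkowski_comb:
  assumes "compact P" "P \<noteq> {}" "compact Q" "Q \<noteq> {}" "0 \<le> t" "t \<le> 1"
  shows "support_fun (minkowski_comb t P Q) u = (1 - t) * support_fun P u + t * support_fun Q u"
proof -
  obtain a where a: "a \<in> P" "u \<in> normal_cone P {a}"
    using compact_exists_maximizer[OF assms(1,2)] by blast
  obtain b where b: "b \<in> Q" "u \<in> normal_cone Q {b}"
    using compact_exists_maximizer[OF assms(3,4)] by blast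
  have "support_fun (minkowski_comb t P Q) u = inner ((1 - t) *\<^sub>R a + t *\<^sub>R b) u"
    using minkowski_comb_common_maximizer[of a P "{u}" b Q t] a b assms(5,6)
    by (intro support_fun_eq_max) auto
  also have "\<dots> = (1 - t) * support_fun P u + t * support_fun Q u"
    using a b by (simp add: support_fun_eq_max inner_add_left)
  finally show ?thesis .
qed

lemma convex_deformation_cone: "convex (deformation_cone \<Delta> v)"
  unfolding convex_alt
proof (intro ballI allI impI)
  fix h1 h2 and t :: real
  assume h: "h1 \<in> deformation_cone \<Delta> v" "h2 \<in> deformation_cone \<Delta> v" and t: "0 \<le> t \<and> t \<le> 1"
  obtain P where P: "polytope P" "P \<noteq> {}" "\<forall>\<sigma>\<in>\<Delta>. \<exists>\<tau>\<in>normal_fan P. \<sigma> \<subseteq> \<tau>"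
    and h1: "h1 = (\<chi> i. support_fun P (v i))"
    using h(1) unfolding deformation_cone_def mem_Collect_eq by (elim exE conjE)
  obtain Q where Q: "polytope Q" "Q \<noteq> {}" "\<forall>\<sigma>\<in>\<Delta>. \<exists>\<tau>\<in>normal_fan Q. \<sigma> \<subseteq> \<tau>"
    and h2: "h2 = (\<chi> i. support_fun Q (v i))"
    using h(2) unfolding deformation_cone_def mem_Collect_eq by (elim exE conjE)
  define R where "R = minkowski_comb t P Q"
  have R: "polytope R" unfolding R_def using P(1) Q(1) by (rule polytope_minkowski_comb)
  have "\<exists>\<tau>\<in>normal_fan R. \<sigma> \<subseteq> \<tau>" if "\<sigma> \<in> \<Delta>" for \<sigma>
  proof -
    from P(3) that have "\<exists>\<tau>\<in>normal_fan P. \<sigma> \<subseteq> \<tau>" by (rule bspec)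
    then obtain a where a: "a \<in> P" "\<sigma> \<subseteq> normal_cone P {a}"
      unfolding subset_cone_of_normal_fan_iff[OF polytope_imp_convex[OF P(1)]] ..
    from Q(3) that have "\<exists>\<tau>\<in>normal_fan Q. \<sigma> \<subseteq> \<tau>" by (rule bspec)
    then obtain b where b: "b \<in> Q" "\<sigma> \<subseteq> normal_cone Q {b}"
      unfolding subset_cone_of_normal_fan_iff[OF polytope_imp_convex[OF Q(1)]] ..
    have "(1 - t) *\<^sub>R a + t *\<^sub>R b \<in> R" "\<sigma> \<subseteq> normal_cone R {(1 - t) *\<^sub>R a + t *\<^sub>R b}"
      using minkowski_comb_common_maximizer[OF a b] t unfolding R_def by auto
    then show ?thesis unfolding subset_cone_of_normal_fan_iff[OF polytope_imp_convex[OF R]] by blast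
  qed
  moreover have "R \<noteq> {}" using P(2) Q(2) by (auto simp: R_def minkowski_comb_def)
  moreover have "(1 - t) *\<^sub>R h1 + t *\<^sub>R h2 = (\<chi> i. support_fun R (v i))"
    unfolding h1 h2 R_def using P(1,2) Q(1,2) t
    by (simp add: vec_eq_iff support_fun_minkowski_comb polytope_imp_compact)
  ultimately show "(1 - t) *\<^sub>R h1 + t *\<^sub>R h2 \<in> deformation_cone \<Delta> v"
    unfolding deformation_cone_def mem_Collect_eq using R by blast
qed

theorem lemma4p6:
  fixes \<Delta> :: "(real^'d) set set"
    and v :: "'n::finite \<Rightarrow> real^'d"
    and U :: "real^'d^'m"
    and h0 hbar hhat :: "real^'n"
    and y y0 ybar yhat :: "real^'m"
  assumes simp: "simplicial_fan_with_rays \<Delta> v"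
    and poly: "polytopal_fan \<Delta>"
    and h0: "h0 \<in> deformation_cone \<Delta> v"
    and y0: "y0 = A_mat \<Delta> v U *v h0"
    and yhat_in: "yhat \<in> (\<lambda>h. A_mat \<Delta> v U *v h) ` deformation_cone \<Delta> v"
    and yhat_min: "\<forall>z \<in> (\<lambda>h. A_mat \<Delta> v U *v h) ` deformation_cone \<Delta> v. dist y yhat \<le> dist y z"
    and ybar_in: "ybar \<in> range (\<lambda>h. A_mat \<Delta> v U *v h)"
    and ybar_orth: "\<forall>z \<in> range (\<lambda>h. A_mat \<Delta> v U *v h). inner (y - ybar) z = 0"
    and hbar: "A_mat \<Delta> v U *v hbar = ybar"
    and hhat: "A_mat \<Delta> v U *v hhat = yhat"
  shows "norm (yhat - y0) \<le> norm (ybar - y0) \<and>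
         sqrt (lambda_min (transpose (A_mat \<Delta> v U) ** A_mat \<Delta> v U)) * norm (hhat - h0)
           \<le> sqrt (lambda_max (transpose (A_mat \<Delta> v U) ** A_mat \<Delta> v U)) * norm (hbar - h0)"
proof -
  let ?A = "A_mat \<Delta> v U"
  let ?C = "(\<lambda>h. ?A *v h) ` deformation_cone \<Delta> v"
  have close: "norm (yhat - y0) \<le> norm (ybar - y0)"
  proof (rule nearest_point_closer_than_projection)
    show "convex ?C"
      by (intro convex_linear_image matrix_vector_mul_linear convex_deformation_cone)
    show "subspace (range (\<lambda>h. ?A *v h))"
      by (intro linear_subspace_image matrix_vector_mul_linear subspace_UNIV)
    show "y0 \<in> ?C" using h0 y0 by blast
  qed (use yhat_in yhat_min ybar_orth in auto)
  have "sqrt (lambda_min (transpose ?A ** ?A)) * norm (hhat - h0) \<le> norm (?A *v (hhat - h0))"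
    by (rule norm_matrix_vector_lambda_bounds(1))
  also have "\<dots> \<le> norm (?A *v (hbar - h0))"
    using close by (simp add: hhat hbar y0 matrix_vector_mult_diff_distrib)
  also have "\<dots> \<le> sqrt (lambda_max (transpose ?A ** ?A)) * norm (hbar - h0)"
    by (rule norm_matrix_vector_lambda_bounds(2))
  finally show ?thesis using close by simp
qed

end
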